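(* Let $q$ be an $\varepsilon$-LDP cap-based mechanism from $\mathcal{X}$ to $\mathcal{Z}$, let $\mathbf{x}\in\mathcal{X}$, let $p$ be the uniform distribution on $\mathcal{Z}$, and let $\mathbf{z}_1,\dots,\mathbf{z}_N$ be $N$ i.i.d. candidates from $p$, with $\theta$ the fraction of candidates in $\mathsf{Cap}_{\mathbf{x}}$. Let $\rho\in(0,1)$ be such that $N=\frac{2(e^\varepsilon-1)^2}{\rho^2}\ln\frac2\rho$. Then \[ \mathbb{E}_\theta\Big[D_{\mathrm{KL}}\big(\pi^{\mathrm{mrc}}_{\mathbf{x},\theta}\,\big\|\,\pi^{\mathrm{mmrc}}_{\mathbf{x},\theta}\big)\Big]\le\rho\,\log e\,(1+\varepsilon). \]
   Context: $\log$ is base 2 and KL divergence is in bits. $\varepsilon$-LDP: $q(\mathbf{z}\mid\mathbf{x})\le e^\varepsilon q(\mathbf{z}\mid\mathbf{x}')$ for all $\mathbf{x},\mathbf{x}',\mathbf{z}$. Cap-based: $q(\mathbf{z}\mid\mathbf{x})=c_1$ if $\mathbf{z}\in\mathsf{Cap}_{\mathbf{x}}$, $=c_2$ otherwise, with constants $c_1\ge c_2$ independent of $\mathbf{x},\mathbf{z}$, and $\mathsf{Cap}_{\mathbf{x}}\subseteq\mathcal{Z}$ such that $\bar\theta=\mathbb{P}_{\mathbf{z}\sim\mathrm{Unif}(\mathcal{Z})}(\mathbf{z}\in\mathsf{Cap}_{\mathbf{x}})$ is independent of $\mathbf{x}$ and $\ge c_2/(2c_1)$ (so $\mathbb{E}[\theta]=\bar\theta$).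 $\pi^{\mathrm{mrc}}_{\mathbf{x},\theta}(k)=\frac1N\frac{c_1}{\theta c_1+(1-\theta)c_2}$ if $\mathbf{z}_k\in\mathsf{Cap}_{\mathbf{x}}$ and $\frac1N\frac{c_2}{\theta c_1+(1-\theta)c_2}$ otherwise. With $t_u=\frac1N\frac{c_1}{\bar\theta c_1+(1-\bar\theta)c_2}$, $t_l=\frac1N\frac{c_2}{\bar\theta c_1+(1-\bar\theta)c_2}$: $\pi^{\mathrm{mmrc}}_{\mathbf{x},\theta}=\pi^{\mathrm{mrc}}_{\mathbf{x},\theta}$ if $\theta=\bar\theta$; if $\theta<\bar\theta$, $\pi^{\mathrm{mmrc}}(k)=t_u$ for cap candidates and $\frac{1-N\theta t_u}{N(1-\theta)}$ otherwise; if $\theta>\bar\theta$, $\pi^{\mathrm{mmrc}}(k)=t_l$ for non-cap candidates and $\frac{1-N(1-\theta)t_l}{N\theta}$ otherwise. *)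

theory Defs
  imports "HOL-Probability.Probability"
begin

text \<open>Cap-based mechanism q(z|x) = c1 on Cap x, c2 otherwise; epsilon-LDP;
  P is the uniform (probability) distribution on Z; every cap has P-mass thetabar,
  independent of x, with thetabar >= c2/(2 c1).\<close>
definition cap_based_ldp ::
  "real \<Rightarrow> 'z measure \<Rightarrow> ('x \<Rightarrow> 'z set) \<Rightarrow> ('x \<Rightarrow> 'z \<Rightarrow> real)
     \<Rightarrow> real \<Rightarrow> real \<Rightarrow> real \<Rightarrow> bool" where
  "cap_based_ldp \<epsilon> P Cap q c1 c2 \<theta>bar \<longleftrightarrow>
     prob_space P \<and> 0 < c2 \<and> c2 \<le> c1 \<and> c1 \<le> exp \<epsilon> * c2 \<and>
     (\<forall>x z. q x z = (if z \<in> Cap x then c1 else c2)) \<and>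
     (\<forall>x x' z. q x z \<le> exp \<epsilon> * q x' z) \<and>
     (\<forall>x. Cap x \<in> sets P \<and> measure P (Cap x) = \<theta>bar) \<and>
     c2 / (2 * c1) \<le> \<theta>bar"

definition cap_frac :: "('x \<Rightarrow> 'z set) \<Rightarrow> 'x \<Rightarrow> nat \<Rightarrow> (nat \<Rightarrow> 'z) \<Rightarrow> real" where
  "cap_frac Cap x N zs = real (card {k \<in> {..<N}. zs k \<in> Cap x}) / real N"

definition pi_mrc :: "real \<Rightarrow> real \<Rightarrow> nat \<Rightarrow> real \<Rightarrow> bool \<Rightarrow> real" where
  "pi_mrc c1 c2 N \<theta> incap =
     (1 / real N) * (if incap then c1 else c2) / (\<theta> * c1 + (1 - \<theta>) * c2)"

definition t_u :: "real \<Rightarrow> real \<Rightarrow> nat \<Rightarrow> real \<Rightarrow> real" where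
  "t_u c1 c2 N \<theta>bar = (1 / real N) * c1 / (\<theta>bar * c1 + (1 - \<theta>bar) * c2)"

definition t_l :: "real \<Rightarrow> real \<Rightarrow> nat \<Rightarrow> real \<Rightarrow> real" where
  "t_l c1 c2 N \<theta>bar = (1 / real N) * c2 / (\<theta>bar * c1 + (1 - \<theta>bar) * c2)"

definition pi_mmrc :: "real \<Rightarrow> real \<Rightarrow> nat \<Rightarrow> real \<Rightarrow> real \<Rightarrow> bool \<Rightarrow> real" where
  "pi_mmrc c1 c2 N \<theta>bar \<theta> incap =
     (if \<theta> = \<theta>bar then pi_mrc c1 c2 N \<theta> incap
      else if \<theta> < \<theta>bar then
        (if incap then t_u c1 c2 N \<theta>bar
         else (1 - real N * \<theta> * t_u c1 c2 N \<theta>bar) / (real N * (1 - \<theta>)))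
      else
        (if incap then (1 - real N * (1 - \<theta>) * t_l c1 c2 N \<theta>bar) / (real N * \<theta>)
         else t_l c1 c2 N \<theta>bar))"

definition kl_bits :: "'a set \<Rightarrow> ('a \<Rightarrow> real) \<Rightarrow> ('a \<Rightarrow> real) \<Rightarrow> real" where
  "kl_bits A p q = (\<Sum>k\<in>A. if p k = 0 then 0 else p k * log 2 (p k / q k))"

end

theory Submission
  imports Defs
begin

text \<open>Both \<open>\<pi>\<^sup>m\<^sup>r\<^sup>c\<close> and \<open>\<pi>\<^sup>m\<^sup>m\<^sup>r\<^sup>c\<close> are constant on the candidates inside the cap and on
  those outside it, so their KL divergence is that of two distributions on two points: the
  cap carries mass \<open>\<theta> c1 / D\<close>, \<open>D = \<theta> c1 + (1 - \<theta>) c2\<close>, under \<open>\<pi>\<^sup>m\<^sup>r\<^sup>c\<close>, while \<open>\<pi>\<^sup>m\<^sup>m\<^sup>r\<^sup>c\<close>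
  pins the candidate probability of one side to its value at \<open>\<theta> = \<theta>bar\<close>. All likelihood
  ratios lie in \<open>(0, c1 / c2]\<close>, so the divergence is at most \<open>ln (c1 / c2) \<le> \<epsilon>\<close>; it is also
  at most the \<open>\<chi>\<^sup>2\<close>-divergence, which is bounded by \<open>\<delta> + 2 \<delta>\<^sup>2\<close> with
  \<open>\<delta> = \<bar>\<theta> - \<theta>bar\<bar> (c1 / c2 - 1)\<close>. By Hoeffding's inequality the event
  \<open>\<bar>\<theta> - \<theta>bar\<bar> \<ge> \<rho> / (2 (e\<^sup>\<epsilon> - 1))\<close> has probability at most \<open>\<rho>\<close> for the given \<open>N\<close>, and off
  this event \<open>\<delta> + 2 \<delta>\<^sup>2 \<le> \<rho>\<close>.\<close>

lemma weighted_mean_bounds: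
  fixes \<theta> lo hi :: real
  assumes "0 \<le> \<theta>" "\<theta> \<le> 1" "lo \<le> hi"
  shows "lo \<le> \<theta> * hi + (1 - \<theta>) * lo" "\<theta> * hi + (1 - \<theta>) * lo \<le> hi"
proof -
  have "0 \<le> \<theta> * (hi - lo)" "0 \<le> (1 - \<theta>) * (hi - lo)" using assms by simp_all
  then show "lo \<le> \<theta> * hi + (1 - \<theta>) * lo" "\<theta> * hi + (1 - \<theta>) * lo \<le> hi"
    by (simp_all add: algebra_simps)
qed

lemma sum_mult_ln_le_ln:
  fixes w r :: "'a \<Rightarrow> real"
  assumes "finite A" "(\<Sum>i\<in>A. w i) = 1"
    and "\<And>i. i \<in> A \<Longrightarrow> 0 \<le> w i" "\<And>i. i \<in> A \<Longrightarrow> 0 < r i" "\<And>i. i \<in> A \<Longrightarrow> r i \<le> R"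
  shows "(\<Sum>i\<in>A. w i * ln (r i)) \<le> ln R"
proof -
  have "(\<Sum>i\<in>A. w i * ln (r i)) \<le> (\<Sum>i\<in>A. w i * ln R)"
    using assms by (intro sum_mono mult_left_mono ln_mono) auto
  also have "\<dots> = ln R" using assms(2) by (simp flip: sum_distrib_right)
  finally show ?thesis .
qed

lemma sum_comp_bool:
  fixes H :: "bool \<Rightarrow> 'b::semiring_1"
  assumes "finite A"
  shows "(\<Sum>k\<in>A. H (P k)) = of_nat (card {k\<in>A. P k}) * H True + of_nat (card {k\<in>A. \<not> P k}) * H False"
proof -
  have "(\<Sum>k\<in>A. H (P k)) = (\<Sum>k\<in>A. if P k then H True else H False)"
    by (rule sum.cong) auto
  also have "\<dots> = of_nat (card {k\<in>A. P k}) * H True + of_nat (card {k\<in>A. \<not> P k}) * H False"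
    using assms by (simp add: sum.If_cases Int_def Collect_conj_eq[symmetric] conj_commute)
  finally show ?thesis .
qed

lemma indep_vars_PiM_components:
  assumes "I \<noteq> {}" and M: "\<And>i. i \<in> I \<Longrightarrow> prob_space (M i)"
  shows "prob_space.indep_vars (PiM I M) M (\<lambda>i \<omega>. \<omega> i) I"
proof -
  interpret prob_space "PiM I M" using M by (rule prob_space_PiM)
  have "distr (PiM I M) (PiM I M) (\<lambda>\<omega>. \<lambda>i\<in>I. \<omega> i) = distr (PiM I M) (PiM I M) (\<lambda>\<omega>. \<omega>)"
    by (intro distr_cong) (auto simp: space_PiM)
  also have "\<dots> = PiM I (\<lambda>i. distr (PiM I M) (M i) (\<lambda>\<omega>. \<omega> i))"
    using M by (auto intro!: PiM_cong simp: distr_PiM_component)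
  finally show ?thesis using assms by (subst indep_vars_iff_distr_eq_PiM') auto
qed

lemma (in prob_space) integral_le_bound_off_event:
  fixes f :: "'a \<Rightarrow> real"
  assumes S: "S \<in> events" "prob S \<le> p" and ab: "0 \<le> a" "0 \<le> b"
    and "\<And>x. x \<in> space M \<Longrightarrow> x \<notin> S \<Longrightarrow> f x \<le> a" "\<And>x. x \<in> space M \<Longrightarrow> f x \<le> a + b"
  shows "(\<integral>x. f x \<partial>M) \<le> a + b * p"
proof -
  have indicator: "integrable M (\<lambda>x. b * indicator S x)"
    using S by (intro integrable_mult_right integrable_real_indicator)
      (auto simp: less_top[symmetric])
  then have "(\<integral>x. f x \<partial>M) \<le> (\<integral>x. a + b * indicator S x \<partial>M)"
    using assms by (intro integral_mono') (auto split: split_indicator)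
  also have "\<dots> = a + b * prob S"
    using S indicator by (simp add: Bochner_Integration.integral_add prob_space sets.Int_space_eq2)
  also have "\<dots> \<le> a + b * p" using S ab by (simp add: mult_left_mono)
  finally show ?thesis .
qed

lemma cap_based_ldpD:
  assumes "cap_based_ldp \<epsilon> P Cap q c1 c2 \<theta>bar"
  shows "prob_space P" "Cap x \<in> sets P" "measure P (Cap x) = \<theta>bar"
    and "0 < c2" "c2 \<le> c1" "c1 \<le> exp \<epsilon> * c2" "0 \<le> \<epsilon>"
    and "0 < \<theta>bar" "\<theta>bar \<le> 1" "c2 / (2 * c1) \<le> \<theta>bar"
proof -
  show P: "prob_space P" and "Cap x \<in> sets P" and cap: "measure P (Cap x) = \<theta>bar"
    and c: "0 < c2" "c2 \<le> c1" "c1 \<le> exp \<epsilon> * c2" and \<theta>bar: "c2 / (2 * c1) \<le> \<theta>bar"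
    using assms unfolding cap_based_ldp_def by auto
  have "1 * c2 \<le> exp \<epsilon> * c2" using c by linarith
  then have "1 \<le> exp \<epsilon>" using c(1) by (rule mult_right_le_imp_le)
  then show "0 \<le> \<epsilon>" by simp
  have "0 < c2 / (2 * c1)" using c by simp
  then show "0 < \<theta>bar" "\<theta>bar \<le> 1"
    using \<theta>bar prob_space.prob_le_1[OF P, of "Cap x"] cap by simp_all
qed

lemma pi_mrc_div_pi_mmrc_below:
  fixes c1 c2 \<theta>bar \<theta> :: real and N :: nat
  assumes c: "0 < c2" "c2 \<le> c1" and \<theta>: "0 \<le> \<theta>" "\<theta> < \<theta>bar" "\<theta>bar \<le> 1" and N: "0 < N"
  defines "D \<equiv> \<theta> * c1 + (1 - \<theta>) * c2" and "Db \<equiv> \<theta>bar * c1 + (1 - \<theta>bar) * c2"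
  defines "a \<equiv> Db - \<theta> * c1"
  shows "pi_mrc c1 c2 N \<theta> True / pi_mmrc c1 c2 N \<theta>bar \<theta> True = Db / D"
    and "pi_mrc c1 c2 N \<theta> False / pi_mmrc c1 c2 N \<theta>bar \<theta> False = (1 - \<theta>) * c2 / a * (Db / D)"
proof -
  have D: "c2 \<le> D" "c2 \<le> Db"
    unfolding D_def Db_def using weighted_mean_bounds(1) c \<theta> by simp_all
  have "0 < (\<theta>bar - \<theta>) * c1" "0 \<le> (1 - \<theta>bar) * c2" using c \<theta> by simp_all
  moreover have "a = (\<theta>bar - \<theta>) * c1 + (1 - \<theta>bar) * c2" unfolding a_def Db_def by algebra
  ultimately have a: "0 < a" by linarith
  show "pi_mrc c1 c2 N \<theta> True / pi_mmrc c1 c2 N \<theta>bar \<theta> True = Db / D"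
    unfolding pi_mrc_def pi_mmrc_def t_u_def D_def[symmetric] Db_def[symmetric]
    using \<theta> N c D by (auto simp: field_simps)
  have mmrc: "pi_mmrc c1 c2 N \<theta>bar \<theta> False = a / (real N * (1 - \<theta>) * Db)"
    unfolding pi_mmrc_def t_u_def Db_def[symmetric] a_def using \<theta> N D c by (simp add: field_simps)
  show "pi_mrc c1 c2 N \<theta> False / pi_mmrc c1 c2 N \<theta>bar \<theta> False = (1 - \<theta>) * c2 / a * (Db / D)"
    unfolding pi_mrc_def mmrc D_def[symmetric] using \<theta> N D c a by (simp add: field_simps)
qed

lemma pi_mrc_div_pi_mmrc_above:
  fixes c1 c2 \<theta>bar \<theta> :: real and N :: nat
  assumes c: "0 < c2" "c2 \<le> c1" and \<theta>: "0 \<le> \<theta>bar" "\<theta>bar < \<theta>" "\<theta> \<le> 1" and N: "0 < N"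
  defines "D \<equiv> \<theta> * c1 + (1 - \<theta>) * c2" and "Db \<equiv> \<theta>bar * c1 + (1 - \<theta>bar) * c2"
  defines "a \<equiv> Db - (1 - \<theta>) * c2"
  shows "pi_mrc c1 c2 N \<theta> True / pi_mmrc c1 c2 N \<theta>bar \<theta> True = \<theta> * c1 / a * (Db / D)"
    and "pi_mrc c1 c2 N \<theta> False / pi_mmrc c1 c2 N \<theta>bar \<theta> False = Db / D"
proof -
  have D: "c2 \<le> D" "c2 \<le> Db"
    unfolding D_def Db_def using weighted_mean_bounds(1) c \<theta> by simp_all
  have "0 < (\<theta> - \<theta>bar) * c2" "0 \<le> \<theta>bar * c1" using c \<theta> by simp_all
  moreover have "a = \<theta>bar * c1 + (\<theta> - \<theta>bar) * c2" unfolding a_def Db_def by algebra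
  ultimately have a: "0 < a" by linarith
  have mmrc: "pi_mmrc c1 c2 N \<theta>bar \<theta> True = a / (real N * \<theta> * Db)"
    unfolding pi_mmrc_def t_l_def Db_def[symmetric] a_def using \<theta> N D c by (simp add: field_simps)
  show "pi_mrc c1 c2 N \<theta> True / pi_mmrc c1 c2 N \<theta>bar \<theta> True = \<theta> * c1 / a * (Db / D)"
    unfolding pi_mrc_def mmrc D_def[symmetric] using \<theta> N D c a by (simp add: field_simps)
  show "pi_mrc c1 c2 N \<theta> False / pi_mmrc c1 c2 N \<theta>bar \<theta> False = Db / D"
    unfolding pi_mrc_def pi_mmrc_def t_l_def D_def[symmetric] Db_def[symmetric]
    using \<theta> N c D by (auto simp: field_simps)
qed

lemma pi_mrc_div_pi_mmrc_below_bounds: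
  fixes c1 c2 \<theta>bar \<theta> :: real and N :: nat
  assumes c: "0 < c2" "c2 \<le> c1" and \<theta>: "0 \<le> \<theta>" "\<theta> < \<theta>bar" "\<theta>bar \<le> 1" and N: "0 < N"
  shows "0 < pi_mrc c1 c2 N \<theta> b / pi_mmrc c1 c2 N \<theta>bar \<theta> b"
    and "pi_mrc c1 c2 N \<theta> b / pi_mmrc c1 c2 N \<theta>bar \<theta> b \<le> c1 / c2"
proof -
  define D Db where "D = \<theta> * c1 + (1 - \<theta>) * c2" and "Db = \<theta>bar * c1 + (1 - \<theta>bar) * c2"
  define a where "a = Db - \<theta> * c1"
  note r = pi_mrc_div_pi_mmrc_below[OF c \<theta> N, folded D_def Db_def, folded a_def]
  have D: "c2 \<le> D" "c2 \<le> Db" "Db \<le> c1"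
    unfolding D_def Db_def using weighted_mean_bounds c \<theta> by simp_all
  have "0 < (\<theta>bar - \<theta>) * c1" "0 \<le> (1 - \<theta>bar) * c2" "0 \<le> (\<theta>bar - \<theta>) * (c1 - c2)"
    using c \<theta> by simp_all
  moreover have "a = (\<theta>bar - \<theta>) * c1 + (1 - \<theta>bar) * c2" unfolding a_def Db_def by algebra
  ultimately have a: "0 < a" "(1 - \<theta>) * c2 \<le> a" by (simp_all add: algebra_simps)
  have "0 < Db / D" "0 < (1 - \<theta>) * c2 / a * (Db / D)"
    using D c \<theta> a by (simp, intro mult_pos_pos) simp_all
  then show "0 < pi_mrc c1 c2 N \<theta> b / pi_mmrc c1 c2 N \<theta>bar \<theta> b"
    using r by (cases b) simp_all
  have "Db / D \<le> c1 / c2" using D c by (intro frac_le) auto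
  moreover have "(1 - \<theta>) * c2 / a * (Db / D) \<le> 1 * (Db / D)"
    using a D c by (intro mult_right_mono) simp_all
  ultimately show "pi_mrc c1 c2 N \<theta> b / pi_mmrc c1 c2 N \<theta>bar \<theta> b \<le> c1 / c2"
    using r by (cases b) simp_all
qed

lemma chi_square_pi_mmrc_below:
  fixes c1 c2 \<theta>bar \<theta> :: real and N :: nat
  assumes c: "0 < c2" "c2 \<le> c1" and \<theta>: "0 \<le> \<theta>" "\<theta> < \<theta>bar" "\<theta>bar \<le> 1" and N: "0 < N"
  defines "D \<equiv> \<theta> * c1 + (1 - \<theta>) * c2"
  defines "r \<equiv> \<lambda>b. pi_mrc c1 c2 N \<theta> b / pi_mmrc c1 c2 N \<theta>bar \<theta> b"
  shows "\<theta> * c1 / D * (r True - 1) + (1 - \<theta>) * c2 / D * (r False - 1) \<le> (\<theta>bar - \<theta>) * (c1 / c2 - 1)"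
proof -
  define Db where "Db = \<theta>bar * c1 + (1 - \<theta>bar) * c2"
  define a where "a = Db - \<theta> * c1"
  have r: "r True = Db / D" "r False = (1 - \<theta>) * c2 / a * (Db / D)"
    using pi_mrc_div_pi_mmrc_below[OF c \<theta> N] unfolding r_def D_def Db_def a_def by simp_all
  have D: "c2 \<le> D" unfolding D_def using weighted_mean_bounds c \<theta> by simp
  have "0 \<le> (1 - \<theta>bar) * c2" using c \<theta> by simp
  moreover have "a = (\<theta>bar - \<theta>) * c1 + (1 - \<theta>bar) * c2" unfolding a_def Db_def by algebra
  moreover have "0 < (\<theta>bar - \<theta>) * c1" using c \<theta> by simp
  ultimately have a: "(\<theta>bar - \<theta>) * c1 \<le> a" "0 < a" by linarith+
  have "Db - D = (\<theta>bar - \<theta>) * (c1 - c2)" "a - (1 - \<theta>) * c2 = (\<theta>bar - \<theta>) * (c1 - c2)"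
    unfolding a_def D_def Db_def by algebra+
  then have "\<theta> * c1 / D * (r True - 1) + (1 - \<theta>) * c2 / D * (r False - 1)
      = \<theta> * c1 / D * (((\<theta>bar - \<theta>) * (c1 - c2))^2 / (D * a))"
    unfolding r using D c a a_def by (simp add: field_simps power2_eq_square) algebra
  also have "\<dots> \<le> 1 * (((\<theta>bar - \<theta>) * (c1 - c2))^2 / (c2 * ((\<theta>bar - \<theta>) * c1)))"
  proof (rule mult_mono)
    show "\<theta> * c1 / D \<le> 1" using D c \<theta> unfolding D_def by simp
    show "((\<theta>bar - \<theta>) * (c1 - c2))^2 / (D * a)
        \<le> ((\<theta>bar - \<theta>) * (c1 - c2))^2 / (c2 * ((\<theta>bar - \<theta>) * c1))"
      using D a c \<theta> by (intro divide_left_mono mult_mono mult_pos_pos) simp_all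
  qed (use c \<theta> D a in simp_all)
  also have "\<dots> = (\<theta>bar - \<theta>) * ((c1 - c2) / c1) * (c1 / c2 - 1)"
    using c \<theta> by (simp add: field_simps power2_eq_square)
  also have "\<dots> \<le> (\<theta>bar - \<theta>) * 1 * (c1 / c2 - 1)"
    using c \<theta> by (intro mult_right_mono mult_left_mono) simp_all
  finally show ?thesis by simp
qed

lemma pi_mrc_div_pi_mmrc_above_bounds:
  fixes c1 c2 \<theta>bar \<theta> :: real and N :: nat
  assumes c: "0 < c2" "c2 \<le> c1" and \<theta>: "0 \<le> \<theta>bar" "\<theta>bar < \<theta>" "\<theta> \<le> 1" and N: "0 < N"
  shows "0 < pi_mrc c1 c2 N \<theta> b / pi_mmrc c1 c2 N \<theta>bar \<theta> b"
    and "pi_mrc c1 c2 N \<theta> b / pi_mmrc c1 c2 N \<theta>bar \<theta> b \<le> c1 / c2"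
proof -
  define D Db where "D = \<theta> * c1 + (1 - \<theta>) * c2" and "Db = \<theta>bar * c1 + (1 - \<theta>bar) * c2"
  define a where "a = Db - (1 - \<theta>) * c2"
  note r = pi_mrc_div_pi_mmrc_above[OF c \<theta> N, folded D_def Db_def, folded a_def]
  have "0 \<le> (\<theta> - \<theta>bar) * (c1 - c2)" using c \<theta> by simp
  then have D: "c2 \<le> Db" "Db \<le> D" unfolding D_def Db_def using weighted_mean_bounds(1) c \<theta>
    by (simp_all add: algebra_simps)
  have "0 \<le> \<theta>bar * (c1 - c2)" "0 < \<theta> * c2" using c \<theta> by simp_all
  moreover have "a = \<theta>bar * c1 + (\<theta> - \<theta>bar) * c2" unfolding a_def Db_def by algebra
  ultimately have a: "\<theta> * c2 \<le> a" "0 < a" by (simp_all add: algebra_simps)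
  have "0 < Db / D" "0 < \<theta> * c1 / a * (Db / D)"
    using D c \<theta> a by (simp, intro mult_pos_pos) simp_all
  then show "0 < pi_mrc c1 c2 N \<theta> b / pi_mmrc c1 c2 N \<theta>bar \<theta> b"
    using r by (cases b) simp_all
  have "\<theta> * c1 / a \<le> c1 / c2"
    using a c \<theta> by (simp add: frac_le_eq divide_le_eq le_divide_eq mult_ac)
  moreover have "0 < Db / D" "Db / D \<le> 1" "1 \<le> c1 / c2" using D c by simp_all
  ultimately show "pi_mrc c1 c2 N \<theta> b / pi_mmrc c1 c2 N \<theta>bar \<theta> b \<le> c1 / c2"
    using r mult_mono[of "\<theta> * c1 / a" "c1 / c2" "Db / D" 1] by (cases b) simp_all
qed

lemma chi_square_pi_mmrc_above:
  fixes c1 c2 \<theta>bar \<theta> :: real and N :: nat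
  assumes c: "0 < c2" "c2 \<le> c1" and \<theta>: "0 \<le> \<theta>bar" "\<theta>bar < \<theta>" "\<theta> \<le> 1" and N: "0 < N"
    and \<theta>bar_ge: "c2 / (2 * c1) \<le> \<theta>bar"
  defines "D \<equiv> \<theta> * c1 + (1 - \<theta>) * c2"
  defines "r \<equiv> \<lambda>b. pi_mrc c1 c2 N \<theta> b / pi_mmrc c1 c2 N \<theta>bar \<theta> b"
  shows "\<theta> * c1 / D * (r True - 1) + (1 - \<theta>) * c2 / D * (r False - 1)
    \<le> 2 * ((\<theta> - \<theta>bar) * (c1 / c2 - 1))^2"
proof -
  define Db where "Db = \<theta>bar * c1 + (1 - \<theta>bar) * c2"
  define a where "a = Db - (1 - \<theta>) * c2"
  have r: "r True = \<theta> * c1 / a * (Db / D)" "r False = Db / D"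
    using pi_mrc_div_pi_mmrc_above[OF c \<theta> N] unfolding r_def D_def Db_def a_def by simp_all
  have D: "c2 \<le> D" unfolding D_def using weighted_mean_bounds c \<theta> by simp
  \<comment> \<open>The only use of \<open>\<theta>bar \<ge> c2 / (2 c1)\<close>: it keeps the cap mass \<open>a / Db\<close> of
    \<open>\<pi>\<^sup>m\<^sup>m\<^sup>r\<^sup>c\<close> away from \<open>0\<close>.\<close>
  have "c2 \<le> 2 * (\<theta>bar * c1)" using \<theta>bar_ge c by (simp add: divide_le_eq mult_ac)
  moreover have "0 \<le> (\<theta> - \<theta>bar) * c2" using c \<theta> by simp
  moreover have "a = \<theta>bar * c1 + (\<theta> - \<theta>bar) * c2" unfolding a_def Db_def by algebra
  ultimately have a: "c2 / 2 \<le> a" "0 < a" using c by linarith+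
  have "D - Db = (\<theta> - \<theta>bar) * (c1 - c2)" "\<theta> * c1 - a = (\<theta> - \<theta>bar) * (c1 - c2)"
    unfolding a_def D_def Db_def by algebra+
  then have "\<theta> * c1 / D * (r True - 1) + (1 - \<theta>) * c2 / D * (r False - 1)
      = (1 - \<theta>) * c2 / D * (((\<theta> - \<theta>bar) * (c1 - c2))^2 / (D * a))"
    unfolding r using D c a a_def by (simp add: field_simps power2_eq_square) algebra
  also have "\<dots> \<le> 1 * (((\<theta> - \<theta>bar) * (c1 - c2))^2 / (c2 * (c2 / 2)))"
  proof (rule mult_mono)
    show "(1 - \<theta>) * c2 / D \<le> 1" using D c \<theta> unfolding D_def by simp
    show "((\<theta> - \<theta>bar) * (c1 - c2))^2 / (D * a) \<le> ((\<theta> - \<theta>bar) * (c1 - c2))^2 / (c2 * (c2 / 2))"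
      using D a c by (intro divide_left_mono mult_mono mult_pos_pos) simp_all
  qed (use c \<theta> D a in simp_all)
  also have "\<dots> = 2 * ((\<theta> - \<theta>bar) * (c1 / c2 - 1))^2"
    using c by (simp add: field_simps power2_eq_square)
  finally show ?thesis .
qed

lemma pi_mrc_pi_mmrc_bounds:
  fixes c1 c2 \<theta>bar \<theta> :: real and N :: nat
  assumes c: "0 < c2" "c2 \<le> c1" and \<theta>bar: "0 \<le> \<theta>bar" "\<theta>bar \<le> 1" "c2 / (2 * c1) \<le> \<theta>bar"
    and \<theta>: "0 \<le> \<theta>" "\<theta> \<le> 1" and N: "0 < N"
  defines "D \<equiv> \<theta> * c1 + (1 - \<theta>) * c2"
  defines "r \<equiv> \<lambda>b. pi_mrc c1 c2 N \<theta> b / pi_mmrc c1 c2 N \<theta>bar \<theta> b"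
  defines "\<delta> \<equiv> \<bar>\<theta> - \<theta>bar\<bar> * (c1 / c2 - 1)"
  shows "0 < r b \<and> r b \<le> c1 / c2"
    and "\<theta> * c1 / D * (r True - 1) + (1 - \<theta>) * c2 / D * (r False - 1) \<le> \<delta> + 2 * \<delta>^2"
proof -
  have \<delta>: "0 \<le> \<delta>" "0 \<le> \<delta>^2" unfolding \<delta>_def using c by simp_all
  consider "\<theta> = \<theta>bar" | "\<theta> < \<theta>bar" | "\<theta>bar < \<theta>" by linarith
  then have "(0 < r b \<and> r b \<le> c1 / c2)
    \<and> \<theta> * c1 / D * (r True - 1) + (1 - \<theta>) * c2 / D * (r False - 1) \<le> \<delta> + 2 * \<delta>^2"
  proof cases
    case 1
    have "0 < D" unfolding D_def using weighted_mean_bounds(1)[OF \<theta> c(2)] c by simp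
    then have "r b' = 1" for b'
      unfolding r_def pi_mmrc_def pi_mrc_def using 1 c N by (simp add: D_def)
    then show ?thesis using c \<delta> by simp
  next
    case 2
    then have "\<delta> = (\<theta>bar - \<theta>) * (c1 / c2 - 1)" unfolding \<delta>_def by simp
    then have "(\<theta>bar - \<theta>) * (c1 / c2 - 1) \<le> \<delta> + 2 * \<delta>^2" using \<delta> by linarith
    with pi_mrc_div_pi_mmrc_below_bounds[OF c \<theta>(1) 2 \<theta>bar(2) N]
      chi_square_pi_mmrc_below[OF c \<theta>(1) 2 \<theta>bar(2) N]
    show ?thesis unfolding r_def D_def by (meson order_trans)
  next
    case 3
    then have "\<delta>^2 = ((\<theta> - \<theta>bar) * (c1 / c2 - 1))^2"
      unfolding \<delta>_def by (simp add: power_mult_distrib)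
    then have "2 * ((\<theta> - \<theta>bar) * (c1 / c2 - 1))^2 \<le> \<delta> + 2 * \<delta>^2" using \<delta> by linarith
    with pi_mrc_div_pi_mmrc_above_bounds[OF c \<theta>bar(1) 3 \<theta>(2) N]
      chi_square_pi_mmrc_above[OF c \<theta>bar(1) 3 \<theta>(2) N \<theta>bar(3)]
    show ?thesis unfolding r_def D_def by (meson order_trans)
  qed
  then show "0 < r b \<and> r b \<le> c1 / c2"
    and "\<theta> * c1 / D * (r True - 1) + (1 - \<theta>) * c2 / D * (r False - 1) \<le> \<delta> + 2 * \<delta>^2"
    by auto
qed

lemma kl_pi_mrc_pi_mmrc_le:
  fixes c1 c2 \<theta>bar \<theta> :: real and N :: nat
  assumes c: "0 < c2" "c2 \<le> c1" and \<theta>bar: "0 \<le> \<theta>bar" "\<theta>bar \<le> 1" "c2 / (2 * c1) \<le> \<theta>bar"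
    and \<theta>: "0 \<le> \<theta>" "\<theta> \<le> 1" and N: "0 < N"
  defines "f \<equiv> pi_mrc c1 c2 N \<theta>" and "g \<equiv> pi_mmrc c1 c2 N \<theta>bar \<theta>"
  defines "L \<equiv> real N * \<theta> * f True * ln (f True / g True)
    + real N * (1 - \<theta>) * f False * ln (f False / g False)"
  defines "\<delta> \<equiv> \<bar>\<theta> - \<theta>bar\<bar> * (c1 / c2 - 1)"
  shows "L \<le> ln (c1 / c2)" and "L \<le> \<delta> + 2 * \<delta>^2"
proof -
  define D where "D = \<theta> * c1 + (1 - \<theta>) * c2"
  have D: "0 < D" unfolding D_def using weighted_mean_bounds(1)[OF \<theta> c(2)] c by simp
  define w where "w b = (if b then \<theta> * c1 else (1 - \<theta>) * c2) / D" for b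
  define r where "r b = f b / g b" for b
  note bounds = pi_mrc_pi_mmrc_bounds[OF c \<theta>bar \<theta> N, folded f_def g_def D_def \<delta>_def]
  have L_eq: "L = (\<Sum>b\<in>UNIV. w b * ln (r b))"
    unfolding L_def w_def r_def f_def pi_mrc_def D_def using N by (simp add: UNIV_bool)
  have w: "(\<Sum>b\<in>UNIV. w b) = 1" "0 \<le> w b" for b
    unfolding w_def using D c \<theta> by (simp_all add: UNIV_bool D_def add_divide_distrib[symmetric])
  have r: "0 < r b" "r b \<le> c1 / c2" for b unfolding r_def using bounds(1) by simp_all
  show "L \<le> ln (c1 / c2)" unfolding L_eq using w r by (intro sum_mult_ln_le_ln) auto
  have "L \<le> (\<Sum>b\<in>UNIV. w b * (r b - 1))"
    unfolding L_eq using w r by (intro sum_mono mult_left_mono ln_le_minus_one) auto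
  also have "\<dots> \<le> \<delta> + 2 * \<delta>^2" using bounds(2) unfolding w_def r_def by (simp add: UNIV_bool)
  finally show "L \<le> \<delta> + 2 * \<delta>^2" .
qed

lemma kl_bits_cap_frac:
  fixes f g :: "bool \<Rightarrow> real" and Cap :: "'x \<Rightarrow> 'z set" and x :: 'x and zs :: "nat \<Rightarrow> 'z"
  assumes N: "0 < N" and f: "\<And>b. f b \<noteq> 0"
  defines "\<theta> \<equiv> cap_frac Cap x N zs"
  shows "kl_bits {..<N} (\<lambda>k. f (zs k \<in> Cap x)) (\<lambda>k. g (zs k \<in> Cap x))
    = log 2 (exp 1) * (real N * \<theta> * f True * ln (f True / g True)
        + real N * (1 - \<theta>) * f False * ln (f False / g False))"
proof -
  have card_in: "real (card {k\<in>{..<N}. zs k \<in> Cap x}) = real N * \<theta>"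
    unfolding \<theta>_def cap_frac_def using N by simp
  have "real N = real (card {k\<in>{..<N}. zs k \<in> Cap x}) + real (card {k\<in>{..<N}. zs k \<notin> Cap x})"
    using sum_comp_bool[of "{..<N}" "\<lambda>_. 1::real" "\<lambda>k. zs k \<in> Cap x"] by simp
  then have card_out: "real (card {k\<in>{..<N}. zs k \<notin> Cap x}) = real N * (1 - \<theta>)"
    unfolding right_diff_distrib card_in[symmetric] by simp
  have "kl_bits {..<N} (\<lambda>k. f (zs k \<in> Cap x)) (\<lambda>k. g (zs k \<in> Cap x))
      = (\<Sum>k\<in>{..<N}. log 2 (exp 1) * (f (zs k \<in> Cap x) * ln (f (zs k \<in> Cap x) / g (zs k \<in> Cap x))))"
    unfolding kl_bits_def using f by (simp add: log_def)
  also have "\<dots> = real (card {k\<in>{..<N}. zs k \<in> Cap x})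
        * (log 2 (exp 1) * (f True * ln (f True / g True)))
      + real (card {k\<in>{..<N}. zs k \<notin> Cap x})
        * (log 2 (exp 1) * (f False * ln (f False / g False)))"
    by (rule sum_comp_bool) simp
  also have "\<dots> = log 2 (exp 1) * (real N * \<theta> * f True * ln (f True / g True)
        + real N * (1 - \<theta>) * f False * ln (f False / g False))"
    unfolding card_in card_out by algebra
  finally show ?thesis .
qed

lemma kl_bits_mrc_mmrc_le:
  fixes \<epsilon> \<rho> c1 c2 \<theta>bar :: real and N :: nat
    and Cap :: "'x \<Rightarrow> 'z set" and x :: 'x and zs :: "nat \<Rightarrow> 'z"
  assumes c: "0 < c2" "c2 \<le> c1" "c1 \<le> exp \<epsilon> * c2"
    and \<theta>bar: "0 \<le> \<theta>bar" "\<theta>bar \<le> 1" "c2 / (2 * c1) \<le> \<theta>bar" and N: "0 < N"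
  defines "\<theta> \<equiv> cap_frac Cap x N zs"
  defines "F \<equiv> kl_bits {..<N} (\<lambda>k. pi_mrc c1 c2 N \<theta> (zs k \<in> Cap x))
    (\<lambda>k. pi_mmrc c1 c2 N \<theta>bar \<theta> (zs k \<in> Cap x))"
  shows "F \<le> log 2 (exp 1) * \<epsilon>"
    and "\<bar>\<theta> - \<theta>bar\<bar> < \<rho> / (2 * (exp \<epsilon> - 1)) \<Longrightarrow> \<rho> < 1 \<Longrightarrow> F \<le> log 2 (exp 1) * \<rho>"
proof -
  have "card {k\<in>{..<N}. zs k \<in> Cap x} \<le> card {..<N}" by (intro card_mono) auto
  then have \<theta>: "0 \<le> \<theta>" "\<theta> \<le> 1" unfolding \<theta>_def cap_frac_def using N by simp_all
  have "0 < \<theta> * c1 + (1 - \<theta>) * c2" using weighted_mean_bounds(1)[OF \<theta> c(2)] c by simp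
  then have mrc_nonzero: "pi_mrc c1 c2 N \<theta> b \<noteq> 0" for b unfolding pi_mrc_def using c N by simp
  define \<delta> where "\<delta> = \<bar>\<theta> - \<theta>bar\<bar> * (c1 / c2 - 1)"
  obtain L where F_eq: "F = log 2 (exp 1) * L" and L: "L \<le> ln (c1 / c2)" "L \<le> \<delta> + 2 * \<delta>^2"
    using kl_bits_cap_frac[where f = "pi_mrc c1 c2 N \<theta>" and g = "pi_mmrc c1 c2 N \<theta>bar \<theta>"
        and Cap = Cap and x = x and zs = zs, OF N mrc_nonzero, folded \<theta>_def F_def]
      kl_pi_mrc_pi_mmrc_le[OF c(1,2) \<theta>bar \<theta> N, folded \<delta>_def]
    by blast
  have log2e: "0 \<le> log 2 (exp 1)" by simp
  have ratio: "1 \<le> c1 / c2" "c1 / c2 \<le> exp \<epsilon>" using c by (simp_all add: divide_le_eq)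
  then have "ln (c1 / c2) \<le> \<epsilon>" using ln_mono[OF ratio(2)] c by simp
  then show "F \<le> log 2 (exp 1) * \<epsilon>" unfolding F_eq using L(1) log2e by (intro mult_left_mono) auto
  assume close: "\<bar>\<theta> - \<theta>bar\<bar> < \<rho> / (2 * (exp \<epsilon> - 1))" and "\<rho> < 1"
  then have "exp \<epsilon> - 1 \<noteq> 0" by auto
  then have "0 < exp \<epsilon> - 1" using ratio by linarith
  then have "\<bar>\<theta> - \<theta>bar\<bar> * (exp \<epsilon> - 1) \<le> \<rho> / 2" using close by (simp add: field_simps)
  moreover have "\<delta> \<le> \<bar>\<theta> - \<theta>bar\<bar> * (exp \<epsilon> - 1)"
    unfolding \<delta>_def using ratio by (intro mult_left_mono) auto
  moreover have "0 \<le> \<delta>" unfolding \<delta>_def using ratio by simp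
  ultimately have \<delta>: "0 \<le> \<delta>" "\<delta> \<le> \<rho> / 2" by linarith+
  then have "\<delta>^2 \<le> (\<rho> / 2)^2" by (intro power_mono) auto
  moreover have "\<rho>^2 \<le> \<rho>" using \<delta> \<open>\<rho> < 1\<close> by (simp add: power2_eq_square mult_left_le_one_le)
  ultimately have "\<delta> + 2 * \<delta>^2 \<le> \<rho>" using \<delta> by (simp add: power_divide)
  then show "F \<le> log 2 (exp 1) * \<rho>" unfolding F_eq using L(2) log2e by (intro mult_left_mono) auto
qed

lemma PiM_indicator_bounded_random_variables:
  fixes P :: "'z measure" and I :: "'i set"
  assumes P: "prob_space P" and C: "C \<in> sets P" and I: "finite I" "I \<noteq> {}"
  shows "indep_interval_bounded_random_variables (PiM I (\<lambda>_. P)) I (\<lambda>i \<omega>. indicator C (\<omega> i))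
      (\<lambda>_. 0) (\<lambda>_. 1)"
    and "i \<in> I \<Longrightarrow> prob_space.expectation (PiM I (\<lambda>_. P)) (\<lambda>\<omega>. indicator C (\<omega> i)) = measure P C"
proof -
  define M where "M = PiM I (\<lambda>_. P)"
  interpret M: prob_space M unfolding M_def using P by (rule prob_space_PiM)
  have component: "(\<lambda>\<omega>. \<omega> i) \<in> measurable M P" if "i \<in> I" for i
    unfolding M_def using that by (rule measurable_component_singleton)
  have "M.indep_vars (\<lambda>_. P) (\<lambda>i \<omega>. \<omega> i) I"
    unfolding M_def using I P by (intro indep_vars_PiM_components) auto
  then have indep: "M.indep_vars (\<lambda>_. borel) (\<lambda>i \<omega>. indicator C (\<omega> i)) I"
    by (rule M.indep_vars_compose2[where Y = "\<lambda>_. indicator C" and N = "\<lambda>_. borel"]) (use C in auto)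
  show "M.expectation (\<lambda>\<omega>. indicator C (\<omega> i)) = measure P C" if "i \<in> I"
  proof -
    have "M.expectation (\<lambda>\<omega>. indicator C (\<omega> i))
        = integral\<^sup>L (distr M P (\<lambda>\<omega>. \<omega> i)) (indicator C :: 'z \<Rightarrow> real)"
      using C by (subst integral_distr[OF component[OF that]]) auto
    also have "distr M P (\<lambda>\<omega>. \<omega> i) = P" unfolding M_def using P that by (intro distr_PiM_component)
    finally show ?thesis using C by (simp add: sets.Int_space_eq2)
  qed
  show "indep_interval_bounded_random_variables M I (\<lambda>i \<omega>. indicator C (\<omega> i)) (\<lambda>_. 0) (\<lambda>_. 1)"
    using indep I by unfold_locales simp_all
qed

lemma prob_cap_frac_deviation:
  fixes P :: "'z measure" and Cap :: "'x \<Rightarrow> 'z set" and t :: real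
  assumes P: "prob_space P" and cap: "Cap x \<in> sets P" and N: "0 < N" and t: "0 \<le> t"
  defines "M \<equiv> PiM {..<N} (\<lambda>_. P)"
  defines "S \<equiv> {zs \<in> space M. t \<le> \<bar>cap_frac Cap x N zs - measure P (Cap x)\<bar>}"
  shows "S \<in> sets M" and "measure M S \<le> 2 * exp (- 2 * real N * t^2)"
proof -
  define X :: "nat \<Rightarrow> (nat \<Rightarrow> 'z) \<Rightarrow> real" where "X = (\<lambda>k zs. indicator (Cap x) (zs k))"
  have nonempty: "{..<N} \<noteq> {}" using N by auto
  interpret indep_interval_bounded_random_variables M "{..<N}" X "\<lambda>_. 0" "\<lambda>_. 1"
    using PiM_indicator_bounded_random_variables(1)[OF P cap finite_lessThan nonempty]
    unfolding M_def X_def .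
  have sum_expectation: "(\<Sum>k\<in>{..<N}. expectation (X k)) = real N * measure P (Cap x)"
    using PiM_indicator_bounded_random_variables(2)[OF P cap finite_lessThan nonempty]
    unfolding M_def X_def by simp
  interpret Hoeffding_ineq M "{..<N}" X "\<lambda>_. 0" "\<lambda>_. 1" "real N * measure P (Cap x)"
    by unfold_locales (simp add: sum_expectation)
  have sum_X: "(\<Sum>k\<in>{..<N}. X k zs) = real N * cap_frac Cap x N zs" for zs
    using sum_comp_bool[of "{..<N}" "\<lambda>b. if b then 1 else 0 :: real" "\<lambda>k. zs k \<in> Cap x"] N
    by (simp add: X_def indicator_def cap_frac_def Int_def)
  have S_eq: "S = {zs \<in> space M. real N * t \<le> \<bar>(\<Sum>k\<in>{..<N}. X k zs) - real N * measure P (Cap x)\<bar>}"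
    unfolding S_def using N by (simp add: sum_X abs_mult flip: right_diff_distrib)
  show "S \<in> sets M" unfolding S_eq by measurable
  have "measure M S \<le> 2 * exp (- 2 * (real N * t)^2 / (\<Sum>k\<in>{..<N}. (1 - 0)^2))"
    unfolding S_eq using N t by (intro Hoeffding_ineq_abs_ge) auto
  also have "\<dots> = 2 * exp (- 2 * real N * t^2)"
    using N by (simp add: power2_eq_square)
  finally show "measure M S \<le> 2 * exp (- 2 * real N * t^2)" .
qed

lemma prob_cap_frac_far_le:
  fixes P :: "'z measure" and Cap :: "'x \<Rightarrow> 'z set" and \<rho> E :: real
  assumes P: "prob_space P" and cap: "Cap x \<in> sets P" and N: "0 < N"
    and \<rho>: "0 < \<rho>" "\<rho> < 1" and E: "0 < E" and N_eq: "real N = 2 * E^2 / \<rho>^2 * ln (2 / \<rho>)"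
  defines "M \<equiv> PiM {..<N} (\<lambda>_. P)"
  defines "S \<equiv> {zs \<in> space M. \<rho> / (2 * E) \<le> \<bar>cap_frac Cap x N zs - measure P (Cap x)\<bar>}"
  shows "S \<in> sets M" and "measure M S \<le> \<rho>"
proof -
  have t: "0 \<le> \<rho> / (2 * E)" using \<rho> E by simp
  note deviation = prob_cap_frac_deviation[where Cap = Cap and x = x, OF P cap N t]
  then show "S \<in> sets M" unfolding S_def M_def by simp
  have "2 * real N * (\<rho> / (2 * E))^2 = ln (2 / \<rho>)"
    unfolding N_eq using E \<rho> by (simp add: power_divide power_mult_distrib)
  then have "2 * exp (- 2 * real N * (\<rho> / (2 * E))^2) = \<rho>" using \<rho> by (simp add: exp_minus)
  then show "measure M S \<le> \<rho>" using deviation(2) unfolding S_def M_def by simp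
qed

theorem lemma4:
  fixes \<epsilon> \<rho> c1 c2 \<theta>bar :: real and P :: "'z measure" and Cap :: "'x \<Rightarrow> 'z set"
    and q :: "'x \<Rightarrow> 'z \<Rightarrow> real" and x :: 'x and N :: nat
  assumes mech: "cap_based_ldp \<epsilon> P Cap q c1 c2 \<theta>bar"
    and rho: "0 < \<rho>" "\<rho> < 1"
    and N: "real N = 2 * (exp \<epsilon> - 1)^2 / \<rho>^2 * ln (2 / \<rho>)"
  shows "(\<integral>zs. kl_bits {..<N}
              (\<lambda>k. pi_mrc c1 c2 N (cap_frac Cap x N zs) (zs k \<in> Cap x))
              (\<lambda>k. pi_mmrc c1 c2 N \<theta>bar (cap_frac Cap x N zs) (zs k \<in> Cap x))
            \<partial>(PiM {..<N} (\<lambda>_. P)))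
         \<le> \<rho> * log 2 (exp 1) * (1 + \<epsilon>)"
proof -
  note P = cap_based_ldpD(1)[OF mech] and cap = cap_based_ldpD(2,3)[OF mech, of x]
    and c = cap_based_ldpD(4-6)[OF mech] and \<epsilon> = cap_based_ldpD(7)[OF mech]
    and \<theta>bar = cap_based_ldpD(8-10)[OF mech]
  show ?thesis
  proof (cases "N = 0")
    case True
    then show ?thesis using rho \<epsilon> by (simp add: kl_bits_def)
  next
    case False
    then have N_pos: "0 < N" by simp
    from False have "exp \<epsilon> \<noteq> 1" using N by auto
    with \<epsilon> have E: "0 < exp \<epsilon> - 1" by (simp add: less_le)
    define M where "M = PiM {..<N} (\<lambda>_. P)"
    define S where "S = {zs \<in> space M. \<rho> / (2 * (exp \<epsilon> - 1)) \<le> \<bar>cap_frac Cap x N zs - \<theta>bar\<bar>}"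
    interpret M: prob_space M unfolding M_def using P by (rule prob_space_PiM)
    note far = prob_cap_frac_far_le[where Cap = Cap and x = x, OF P cap(1) N_pos rho E N,
        folded M_def, unfolded cap(2), folded S_def]
    define F where "F zs = kl_bits {..<N}
      (\<lambda>k. pi_mrc c1 c2 N (cap_frac Cap x N zs) (zs k \<in> Cap x))
      (\<lambda>k. pi_mmrc c1 c2 N \<theta>bar (cap_frac Cap x N zs) (zs k \<in> Cap x))" for zs
    note kl_le = kl_bits_mrc_mmrc_le[where Cap = Cap and x = x,
        OF c less_imp_le[OF \<theta>bar(1)] \<theta>bar(2,3) N_pos, folded F_def]
    have rhs: "\<rho> * log 2 (exp 1) * (1 + \<epsilon>) = log 2 (exp 1) * \<rho> + log 2 (exp 1) * \<epsilon> * \<rho>"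
      by algebra
    show ?thesis unfolding M_def[symmetric] F_def[symmetric] rhs
    proof (rule M.integral_le_bound_off_event)
      show "S \<in> M.events" "M.prob S \<le> \<rho>" by (fact far)+
      show "F zs \<le> log 2 (exp 1) * \<rho>" if "zs \<notin> S" "zs \<in> space M" for zs
        using kl_le(2) rho that unfolding S_def by auto
      show "F zs \<le> log 2 (exp 1) * \<rho> + log 2 (exp 1) * \<epsilon>" for zs
        using kl_le(1)[of zs] rho by (simp add: add_increasing)
      show "0 \<le> log 2 (exp 1) * \<rho>" "0 \<le> log 2 (exp 1) * \<epsilon>" using rho \<epsilon> by simp_all
    qed
  qed
qed

end
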